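(* Let $\mathcal{H}=(\mathcal{V},\mathcal{E})$ be a connected Sperner hypergraph with $|\mathcal{E}|\ge 2$. (i) If $F(\mathcal{H})\neq\emptyset$, then $(\lambda-1)^2$ divides $P(\mathcal{H},\lambda)$ if and only if $|F(\mathcal{H})|=1$. (ii) Suppose $F(\mathcal{H})=\emptyset$ and there are a vertex $w$ and two proper subsets $\mathcal{V}_1,\mathcal{V}_2$ of $\mathcal{V}$ with $\mathcal{V}_1\cup\mathcal{V}_2=\mathcal{V}$, $\mathcal{V}_1\cap\mathcal{V}_2=\{w\}$, and such that every $e\in\mathcal{E}$ satisfies $w\in e$ or $e\subseteq\mathcal{V}_i$ for some $i\in\{1,2\}$. Then $(\lambda-1)^2$ divides $P(\mathcal{H},\lambda)$ if and only if one of the following holds: (a) $\mathcal{V}_1\notin\mathcal{I}(\mathcal{H})$ and $\mathcal{V}_2\notin\mathcal{I}(\mathcal{H})$; (b) for some $i\in\{1,2\}$, $\mathcal{V}_i\in\mathcal{I}(\mathcal{H})$, $\mathcal{V}_{3-i}\notin\mathcal{I}(\mathcal{H})$, and $(\lambda-1)^2$ divides $P(\mathcal{H}\cdot\mathcal{V}_i,\lambda)$.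
   Context: A hypergraph $\mathcal{H}=(\mathcal{V},\mathcal{E})$ consists of a finite vertex set $\mathcal{V}$ and a set $\mathcal{E}$ of subsets of $\mathcal{V}$, each of size at least $1$, called edges. For a positive integer $\lambda$, a weak proper $\lambda$-colouring of $\mathcal{H}$ is a map $\phi:\mathcal{V}\to\{1,\dots,\lambda\}$ such that $|\{\phi(v):v\in e\}|>1$ for every $e\in\mathcal{E}$. $P(\mathcal{H},\lambda)$ denotes the number of weak proper $\lambda$-colourings; it is a polynomial in $\lambda$. $\mathcal{H}$ is connected if for any two vertices $v_1,v_2$ there is a sequence of edges $e_0,\dots,e_k$ with $v_1\in e_0$, $v_2\in e_k$, $e_i\cap e_{i+1}\ne\emptyset$. $\mathcal{H}$ is Sperner if $e_1\not\subseteq e_2$ for all distinct edges $e_1,e_2$. $F(\mathcal{H})$ is the set of vertices lying in every edge of $\mathcal{H}$. For $\mathcal{V}_0\subseteq\mathcal{V}$, $\mathcal{H}[\mathcal{V}_0]$ is the hypergraph with vertex set $\mathcal{V}_0$ and edge set $\{e\in\mathcal{E}:e\subseteq\mathcal{V}_0\}$, and $\mathcal{I}(\mathcal{H})$ is the set of subsets $\mathcal{V}_0\subseteq\mathcal{V}$ such that $\mathcal{H}[\mathcal{V}_0]$ has no edges. $\mathcal{H}\cdot\mathcal{V}_0$ is obtained by identifying all vertices of $\mathcal{V}_0$ into one new vertex $w'$: its vertex set is $(\mathcal{V}\setminus\mathcal{V}_0)\cup\{w'\}$ and its edge set is $\{e\in\mathcal{E}:e\cap\mathcal{V}_0=\emptyset\}\cup\{(e\setminus\mathcal{V}_0)\cup\{w'\}:e\cap\mathcal{V}_0\ne\emptyset\}$.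 *)

theory Defs
  imports Main "HOL-Library.FuncSet" "HOL-Computational_Algebra.Polynomial"
begin

definition hypergraph :: "'a set \<Rightarrow> 'a set set \<Rightarrow> bool" where
  "hypergraph V E \<longleftrightarrow> finite V \<and> (\<forall>e\<in>E. e \<subseteq> V \<and> e \<noteq> {})"

definition weak_proper_colourings :: "'a set \<Rightarrow> 'a set set \<Rightarrow> nat \<Rightarrow> ('a \<Rightarrow> nat) set" where
  "weak_proper_colourings V E lam =
     {\<phi> \<in> V \<rightarrow>\<^sub>E {1..lam}. \<forall>e\<in>E. card (\<phi> ` e) > 1}"

definition chrom_count :: "'a set \<Rightarrow> 'a set set \<Rightarrow> nat \<Rightarrow> nat" where
  "chrom_count V E lam = card (weak_proper_colourings V E lam)"

definition chrom_poly :: "'a set \<Rightarrow> 'a set set \<Rightarrow> int poly" where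
  "chrom_poly V E = (THE p. \<forall>n::nat. poly p (of_nat n) = of_nat (chrom_count V E n))"

definition hg_connected :: "'a set \<Rightarrow> 'a set set \<Rightarrow> bool" where
  "hg_connected V E \<longleftrightarrow>
     (\<forall>v1\<in>V. \<forall>v2\<in>V. \<exists>es. es \<noteq> [] \<and> set es \<subseteq> E \<and> v1 \<in> hd es \<and> v2 \<in> last es \<and>
        (\<forall>i. Suc i < length es \<longrightarrow> es ! i \<inter> es ! Suc i \<noteq> {}))"

definition sperner :: "'a set set \<Rightarrow> bool" where
  "sperner E \<longleftrightarrow> (\<forall>e1\<in>E. \<forall>e2\<in>E. e1 \<noteq> e2 \<longrightarrow> \<not> e1 \<subseteq> e2)"

definition core :: "'a set \<Rightarrow> 'a set set \<Rightarrow> 'a set" where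
  "core V E = {v \<in> V. \<forall>e\<in>E. v \<in> e}"

definition induced_edges :: "'a set set \<Rightarrow> 'a set \<Rightarrow> 'a set set" where
  "induced_edges E V0 = {e \<in> E. e \<subseteq> V0}"

definition indep_sets :: "'a set \<Rightarrow> 'a set set \<Rightarrow> 'a set set" where
  "indep_sets V E = {V0. V0 \<subseteq> V \<and> induced_edges E V0 = {}}"

text \<open>H . V0: identify all vertices of V0 into one new vertex (None); old vertices v become Some v.\<close>
definition contract_V :: "'a set \<Rightarrow> 'a set \<Rightarrow> 'a option set" where
  "contract_V V V0 = Some ` (V - V0) \<union> {None}"

definition contract_E :: "'a set set \<Rightarrow> 'a set \<Rightarrow> 'a option set set" where
  "contract_E E V0 = {Some ` e | e. e \<in> E \<and> e \<inter> V0 = {}}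
                    \<union> {Some ` (e - V0) \<union> {None} | e. e \<in> E \<and> e \<inter> V0 \<noteq> {}}"

end

theory Submission
  imports Defs
begin

text \<open>Colour a fixed vertex \<open>w\<close> first. Sorting the weak proper \<open>(\<lambda>+1)\<close>-colourings by the colour
  of \<open>w\<close> and by its colour class \<open>S\<close>, an independent set containing \<open>w\<close>, gives
  \<open>P(H, \<lambda>+1) = (\<lambda>+1) \<Sum>\<^sub>S P(H - S, \<lambda>)\<close>; hence \<open>(\<lambda>-1)\<^sup>2\<close> divides \<open>P(H, \<lambda>)\<close> iff
  \<open>\<lambda>\<^sup>2\<close> divides the sum. If \<open>w\<close> lies in every edge, each \<open>H - S\<close> is edgeless and contributes
  \<open>\<lambda>\<^bsup>|V - S|\<^esup>\<close>, and the exponent is \<open>1\<close> exactly when \<open>S = V - {v}\<close> for a second vertex \<open>v\<close>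
  of the core. At a cut vertex \<open>w\<close>, a class \<open>S\<close> containing neither \<open>V\<^sub>1\<close> nor \<open>V\<^sub>2\<close> leaves
  \<open>H - S\<close> disconnected into two nonempty parts, so \<open>\<lambda>\<^sup>2\<close> divides its term. The classes
  \<open>S \<supseteq> V\<^sub>1\<close> that remain are, by the same count applied to colourings constant on \<open>V\<^sub>1\<close>,
  exactly those of the contraction \<open>H\<cdot>V\<^sub>1\<close>.\<close>

section \<open>Polynomials\<close>

lemma int_poly_eqI_of_nat:
  fixes p q :: "'a::{idom, ring_char_0} poly"
  assumes "\<And>n. poly p (of_nat n) = poly q (of_nat n)"
  shows "p = q"
proof (rule ccontr)
  assume "p \<noteq> q"
  then have "finite {x. poly (p - q) x = 0}" by (intro poly_roots_finite) simp
  moreover have "range (of_nat :: nat \<Rightarrow> 'a) \<subseteq> {x. poly (p - q) x = 0}" using assms by auto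
  ultimately have "finite (range (of_nat :: nat \<Rightarrow> 'a))" by (rule finite_subset[rotated])
  then show False using finite_imageD[of "of_nat :: nat \<Rightarrow> 'a" UNIV] by (simp add: inj_of_nat)
qed

lemma pcompose_power_left: "pcompose (p ^ n) q = pcompose p q ^ n"
  by (induction n) (simp_all add: pcompose_1 pcompose_mult)

lemma pcompose_dvd_pcompose: "p dvd q \<Longrightarrow> pcompose p r dvd pcompose q r"
  by (auto elim!: dvdE simp: pcompose_mult)

lemma linear_power_dvd_iff_pcompose:
  fixes p :: "'a::comm_ring_1 poly"
  shows "[:-a, 1:] ^ n dvd p \<longleftrightarrow> [:0, 1:] ^ n dvd pcompose p [:a, 1:]"
proof
  assume "[:-a, 1:] ^ n dvd p"
  then have "pcompose ([:-a, 1:] ^ n) [:a, 1:] dvd pcompose p [:a, 1:]"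
    by (rule pcompose_dvd_pcompose)
  then show "[:0, 1:] ^ n dvd pcompose p [:a, 1:]"
    by (simp add: pcompose_power_left pcompose_pCons)
next
  assume "[:0, 1:] ^ n dvd pcompose p [:a, 1:]"
  then have "pcompose ([:0, 1:] ^ n) [:-a, 1:] dvd pcompose (pcompose p [:a, 1:]) [:-a, 1:]"
    by (rule pcompose_dvd_pcompose)
  moreover have "pcompose (pcompose p [:a, 1:]) [:-a, 1:] = p"
    by (simp add: pcompose_assoc[symmetric] pcompose_pCons)
  ultimately show "[:-a, 1:] ^ n dvd p"
    by (simp add: pcompose_power_left pcompose_pCons)
qed

lemma x_power_dvd_iff_coeff: "[:0, 1:] ^ n dvd p \<longleftrightarrow> (\<forall>k<n. coeff p k = 0)"
  using monom_1_dvd_iff'[of n p] by (simp add: monom_altdef)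

lemma x_square_dvd_mult_iff:
  fixes q :: "'a::comm_ring_1 poly"
  shows "[:0, 1:] ^ 2 dvd [:1, 1:] * q \<longleftrightarrow> [:0, 1:] ^ 2 dvd q"
  unfolding x_power_dvd_iff_coeff numeral_2_eq_2 by (auto simp: All_less_Suc coeff_pCons)

lemma x_power_dvd_sum_x_powers_iff:
  fixes k :: "'b \<Rightarrow> nat"
  assumes "finite I"
  shows "([:0, 1:] ^ n :: 'a::{comm_ring_1, ring_char_0} poly) dvd (\<Sum>i\<in>I. [:0, 1:] ^ k i)
         \<longleftrightarrow> (\<forall>i\<in>I. n \<le> k i)"
proof
  assume dvd: "([:0, 1:] ^ n :: 'a poly) dvd (\<Sum>i\<in>I. [:0, 1:] ^ k i)"
  show "\<forall>i\<in>I. n \<le> k i"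
  proof (rule ccontr)
    assume "\<not> (\<forall>i\<in>I. n \<le> k i)"
    then obtain i where i: "i \<in> I" "k i < n" by auto
    have "coeff (\<Sum>j\<in>I. [:0, 1:] ^ k j :: 'a poly) (k i) = of_nat (card {j \<in> I. k j = k i})"
      using assms
      by (simp add: coeff_sum monom_altdef[of 1, simplified, symmetric] sum.If_cases, simp add: Int_def)
    moreover have "card {j \<in> I. k j = k i} \<noteq> 0" using assms i by auto
    ultimately show False using dvd i by (simp add: x_power_dvd_iff_coeff)
  qed
qed (auto intro: dvd_sum le_imp_power_dvd)

section \<open>Weak proper colourings\<close>

definition colourings :: "'a set \<Rightarrow> 'a set set \<Rightarrow> 'c set \<Rightarrow> ('a \<Rightarrow> 'c) set" where
  "colourings V E C = {\<phi> \<in> V \<rightarrow>\<^sub>E C. \<forall>e\<in>E. 1 < card (\<phi> ` e)}"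

definition indep_supersets :: "'a set \<Rightarrow> 'a set set \<Rightarrow> 'a set \<Rightarrow> 'a set set" where
  "indep_supersets V E A = {S \<in> indep_sets V E. A \<subseteq> S}"

lemma chrom_count_eq_card_colourings: "chrom_count V E n = card (colourings V E {1..n})"
  by (simp add: chrom_count_def weak_proper_colourings_def colourings_def)

lemma finite_colourings: "finite V \<Longrightarrow> finite C \<Longrightarrow> finite (colourings V E C)"
  unfolding colourings_def by (rule finite_subset[of _ "V \<rightarrow>\<^sub>E C"]) (auto intro: finite_PiE)

lemma finite_indep_supersets: "finite V \<Longrightarrow> finite (indep_supersets V E A)"
  unfolding indep_supersets_def indep_sets_def by (rule finite_subset[of _ "Pow V"]) auto

lemma indep_supersets_eq_empty_iff:
  "A \<subseteq> V \<Longrightarrow> indep_supersets V E A = {} \<longleftrightarrow> A \<notin> indep_sets V E"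
  unfolding indep_supersets_def indep_sets_def induced_edges_def by blast

lemma complement_singleton_indep_iff:
  assumes "hypergraph V E" and "v \<in> V"
  shows "V - {v} \<in> indep_sets V E \<longleftrightarrow> v \<in> core V E"
  using assms by (auto simp: indep_sets_def induced_edges_def core_def hypergraph_def)

lemma hypergraph_induced: "hypergraph V E \<Longrightarrow> X \<subseteq> V \<Longrightarrow> hypergraph X (induced_edges E X)"
  by (auto simp: hypergraph_def induced_edges_def intro: finite_subset)

lemma hypergraph_contract:
  "hypergraph V E \<Longrightarrow> V1 \<subseteq> V \<Longrightarrow> hypergraph (contract_V V V1) (contract_E E V1)"
  unfolding hypergraph_def contract_V_def contract_E_def by blast

lemma one_less_card_image_iff:
  "finite e \<Longrightarrow> 1 < card (\<phi> ` e) \<longleftrightarrow> (\<exists>a\<in>e. \<exists>b\<in>e. \<phi> a \<noteq> \<phi> b)"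
  using card_le_Suc0_iff_eq[of "\<phi> ` e"] by (auto simp: not_le[symmetric])

lemma colour_class_indep:
  assumes "\<phi> \<in> colourings V E C"
  shows "{v \<in> V. \<phi> v = c} \<in> indep_sets V E"
proof -
  have "\<not> e \<subseteq> {v \<in> V. \<phi> v = c}" if "e \<in> E" for e
  proof
    assume "e \<subseteq> {v \<in> V. \<phi> v = c}"
    then have "\<phi> ` e \<subseteq> {c}" by auto
    then have "card (\<phi> ` e) \<le> 1" using card_mono[of "{c}" "\<phi> ` e"] by simp
    moreover have "1 < card (\<phi> ` e)" using assms that by (simp add: colourings_def)
    ultimately show False by simp
  qed
  then show ?thesis by (auto simp: indep_sets_def induced_edges_def)
qed

lemma colourings_restrict:
  assumes "\<phi> \<in> colourings V E C" and "X \<subseteq> V"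
  shows "restrict \<phi> X \<in> colourings X (induced_edges E X) C"
proof -
  have "restrict \<phi> X ` e = \<phi> ` e" if "e \<in> induced_edges E X" for e
    using that by (auto simp: induced_edges_def)
  then show ?thesis using assms by (auto simp: colourings_def induced_edges_def)
qed

lemma colourings_relabel:
  assumes "bij_betw h C D" and "\<phi> \<in> colourings V E C" and "\<forall>e\<in>E. e \<subseteq> V"
  shows "restrict (h \<circ> \<phi>) V \<in> colourings V E D"
proof -
  have \<phi>: "\<phi> \<in> V \<rightarrow>\<^sub>E C" "\<forall>e\<in>E. 1 < card (\<phi> ` e)"
    using assms(2) by (auto simp: colourings_def)
  have "card (restrict (h \<circ> \<phi>) V ` e) = card (\<phi> ` e)" if "e \<in> E" for e
  proof -
    have "restrict (h \<circ> \<phi>) V ` e = h ` \<phi> ` e" using assms(3) that by auto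
    moreover have "inj_on h (\<phi> ` e)"
      using assms(1,3) \<phi>(1) that by (auto simp: bij_betw_def intro: inj_on_subset)
    ultimately show ?thesis by (simp add: card_image)
  qed
  then show ?thesis using assms(1) \<phi> by (auto simp: colourings_def bij_betw_def)
qed

lemma card_colourings:
  assumes "finite C" and "\<forall>e\<in>E. e \<subseteq> V"
  shows "card (colourings V E C) = chrom_count V E (card C)"
proof -
  obtain h where h: "bij_betw h C {1..card C}"
    using finite_same_card_bij[of C "{1..card C}"] assms(1) by auto
  let ?g = "inv_into C h"
  have g: "bij_betw ?g {1..card C} C" using h by (rule bij_betw_inv_into)
  have gh: "?g (h c) = c" if "c \<in> C" for c
    using h that by (simp add: bij_betw_def)
  have hg: "h (?g d) = d" if "d \<in> {1..card C}" for d
    using h that by (simp add: bij_betw_def f_inv_into_f)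
  have "bij_betw (\<lambda>\<phi>. restrict (h \<circ> \<phi>) V) (colourings V E C) (colourings V E {1..card C})"
  proof (rule bij_betw_byWitness[where f' = "\<lambda>\<phi>. restrict (?g \<circ> \<phi>) V"])
    show "\<forall>\<phi>\<in>colourings V E C. restrict (?g \<circ> restrict (h \<circ> \<phi>) V) V = \<phi>"
      using gh by (auto simp: colourings_def PiE_def Pi_def extensional_def fun_eq_iff)
    show "\<forall>\<phi>\<in>colourings V E {1..card C}. restrict (h \<circ> restrict (?g \<circ> \<phi>) V) V = \<phi>"
      using hg by (auto simp: colourings_def PiE_def Pi_def extensional_def fun_eq_iff)
    show "(\<lambda>\<phi>. restrict (h \<circ> \<phi>) V) ` colourings V E C \<subseteq> colourings V E {1..card C}"
      using colourings_relabel[OF h _ assms(2)] by blast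
    show "(\<lambda>\<phi>. restrict (?g \<circ> \<phi>) V) ` colourings V E {1..card C} \<subseteq> colourings V E C"
      using colourings_relabel[OF g _ assms(2)] by blast
  qed
  then show ?thesis by (simp add: bij_betw_same_card chrom_count_eq_card_colourings)
qed

section \<open>Sorting colourings by a colour class\<close>

lemma card_colourings_colour_class:
  assumes hyp: "hypergraph V E" and S: "S \<in> indep_sets V E" and C: "finite C" "c \<in> C"
  shows "card {\<phi> \<in> colourings V E C. {v \<in> V. \<phi> v = c} = S}
         = chrom_count (V - S) (induced_edges E (V - S)) (card C - 1)"
proof -
  define F where "F = {\<phi> \<in> colourings V E C. {v \<in> V. \<phi> v = c} = S}"
  define G where "G = colourings (V - S) (induced_edges E (V - S)) (C - {c})"
  have EV: "\<And>e. e \<in> E \<Longrightarrow> e \<subseteq> V" and finV: "finite V" using hyp by (auto simp: hypergraph_def)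
  have fin_edge: "\<And>e. e \<in> E \<Longrightarrow> finite e" using EV finV by (meson finite_subset)
  have SV: "S \<subseteq> V" and leaves: "\<And>e. e \<in> E \<Longrightarrow> \<not> e \<subseteq> S"
    using S by (auto simp: indep_sets_def induced_edges_def)
  define extend where "extend \<psi> v = (if v \<in> S then c else \<psi> v)" for \<psi> :: "'a \<Rightarrow> 'b" and v
  have "extend \<psi> \<in> F" if "\<psi> \<in> G" for \<psi>
  proof -
    have \<psi>: "\<psi> \<in> (V - S) \<rightarrow>\<^sub>E (C - {c})" "\<forall>e\<in>induced_edges E (V - S). 1 < card (\<psi> ` e)"
      using that by (auto simp: G_def colourings_def)
    have "1 < card (extend \<psi> ` e)" if e: "e \<in> E" for e
    proof (cases "e \<inter> S = {}")
      case True
      then have "e \<in> induced_edges E (V - S)" and "extend \<psi> ` e = \<psi> ` e"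
        using e EV by (auto simp: induced_edges_def extend_def)
      then show ?thesis using \<psi>(2) by auto
    next
      case False
      then obtain a b where ab: "a \<in> e \<inter> S" "b \<in> e - S" using leaves[OF e] by auto
      moreover have "\<psi> b \<noteq> c" using \<psi>(1) ab EV[OF e] by auto
      ultimately have "extend \<psi> a \<noteq> extend \<psi> b" by (simp add: extend_def)
      then show ?thesis using ab one_less_card_image_iff[OF fin_edge[OF e]] by blast
    qed
    moreover have "extend \<psi> \<in> V \<rightarrow>\<^sub>E C" "{v \<in> V. extend \<psi> v = c} = S"
      using \<psi>(1) SV C(2) by (auto simp: extend_def PiE_iff extensional_def)
    ultimately show ?thesis by (simp add: F_def colourings_def)
  qed
  moreover have "restrict \<phi> (V - S) \<in> G" if "\<phi> \<in> F" for \<phi>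
  proof -
    have "restrict \<phi> (V - S) \<in> colourings (V - S) (induced_edges E (V - S)) C"
      using that by (auto simp: F_def intro: colourings_restrict)
    then show ?thesis using that by (auto simp: F_def G_def colourings_def)
  qed
  moreover have "extend (restrict \<phi> (V - S)) = \<phi>" if "\<phi> \<in> F" for \<phi>
    using that SV by (auto simp: F_def colourings_def PiE_iff extensional_def fun_eq_iff extend_def)
  moreover have "restrict (extend \<psi>) (V - S) = \<psi>" if "\<psi> \<in> G" for \<psi>
    using that by (auto simp: G_def colourings_def PiE_iff extensional_def fun_eq_iff extend_def)
  ultimately have "bij_betw (\<lambda>\<phi>. restrict \<phi> (V - S)) F G"
    by (intro bij_betw_byWitness[where f' = extend]) auto
  then have "card F = card G" by (rule bij_betw_same_card)
  also have "card G = chrom_count (V - S) (induced_edges E (V - S)) (card (C - {c}))"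
    unfolding G_def by (rule card_colourings) (use C in \<open>auto simp: induced_edges_def\<close>)
  finally show ?thesis using C by (simp add: F_def)
qed

lemma colourings_const_on_eq_UN_colour_classes:
  assumes "A \<subseteq> V" "A \<noteq> {}"
  shows "{\<phi> \<in> colourings V E C. \<forall>a\<in>A. \<forall>b\<in>A. \<phi> a = \<phi> b}
         = (\<Union>(c, S)\<in>C \<times> indep_supersets V E A. {\<phi> \<in> colourings V E C. {v \<in> V. \<phi> v = c} = S})"
proof (intro equalityI subsetI)
  fix \<phi> assume "\<phi> \<in> {\<phi> \<in> colourings V E C. \<forall>a\<in>A. \<forall>b\<in>A. \<phi> a = \<phi> b}"
  then have col: "\<phi> \<in> colourings V E C" and const: "\<forall>a\<in>A. \<forall>b\<in>A. \<phi> a = \<phi> b"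
    by blast+
  obtain a0 where a0: "a0 \<in> A" using assms(2) by blast
  have "\<phi> a0 \<in> C" using col a0 assms(1) by (auto simp: colourings_def)
  moreover have "A \<subseteq> {v \<in> V. \<phi> v = \<phi> a0}" using const a0 assms(1) by blast
  then have "{v \<in> V. \<phi> v = \<phi> a0} \<in> indep_supersets V E A"
    using colour_class_indep[OF col] by (simp add: indep_supersets_def)
  ultimately show "\<phi> \<in> (\<Union>(c, S)\<in>C \<times> indep_supersets V E A. {\<phi> \<in> colourings V E C. {v \<in> V. \<phi> v = c} = S})"
    using col by (intro UN_I[of "(\<phi> a0, {v \<in> V. \<phi> v = \<phi> a0})"]) simp_all
next
  fix \<phi> assume "\<phi> \<in> (\<Union>(c, S)\<in>C \<times> indep_supersets V E A. {\<phi> \<in> colourings V E C. {v \<in> V. \<phi> v = c} = S})"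
  then obtain c where "\<phi> \<in> colourings V E C" and "A \<subseteq> {v \<in> V. \<phi> v = c}"
    by (auto simp: indep_supersets_def)
  then show "\<phi> \<in> {\<phi> \<in> colourings V E C. \<forall>a\<in>A. \<forall>b\<in>A. \<phi> a = \<phi> b}" by blast
qed

lemma colour_classes_disjoint:
  assumes "(c, S) \<noteq> (c', S')" and "S \<inter> S' \<noteq> {}"
  shows "{\<phi> \<in> colourings V E C. {v \<in> V. \<phi> v = c} = S} \<inter> {\<phi> \<in> colourings V E C. {v \<in> V. \<phi> v = c'} = S'} = {}"
proof -
  have "\<phi> \<notin> {\<phi> \<in> colourings V E C. {v \<in> V. \<phi> v = c'} = S'}"
    if \<phi>: "{v \<in> V. \<phi> v = c} = S" for \<phi>
  proof
    assume "\<phi> \<in> {\<phi> \<in> colourings V E C. {v \<in> V. \<phi> v = c'} = S'}"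
    then have \<phi>': "{v \<in> V. \<phi> v = c'} = S'" by blast
    then have "c = c'" using \<phi> assms(2) by blast
    then show False using \<phi> \<phi>' assms(1) by simp
  qed
  then show ?thesis by blast
qed

lemma card_colourings_const_on:
  assumes hyp: "hypergraph V E" and A: "A \<subseteq> V" "A \<noteq> {}" and C: "finite C"
  shows "card {\<phi> \<in> colourings V E C. \<forall>a\<in>A. \<forall>b\<in>A. \<phi> a = \<phi> b}
         = card C * (\<Sum>S\<in>indep_supersets V E A. chrom_count (V - S) (induced_edges E (V - S)) (card C - 1))"
proof -
  let ?I = "C \<times> indep_supersets V E A"
  let ?class = "\<lambda>(c, S). {\<phi> \<in> colourings V E C. {v \<in> V. \<phi> v = c} = S}"
  have finV: "finite V" using hyp by (simp add: hypergraph_def)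
  have "?class p \<inter> ?class q = {}" if "p \<in> ?I" "q \<in> ?I" "p \<noteq> q" for p q
  proof -
    obtain c S c' S' where pq: "p = (c, S)" "q = (c', S')" by fastforce
    have "A \<subseteq> S \<inter> S'" using that pq by (simp add: indep_supersets_def)
    then have "S \<inter> S' \<noteq> {}" using A(2) by blast
    then show ?thesis using colour_classes_disjoint that(3) pq by simp
  qed
  moreover have "finite ?I" using C finV by (simp add: finite_indep_supersets)
  moreover have "finite (?class p)" for p
    using finite_colourings[OF finV C] by (simp add: split_def)
  ultimately have "card {\<phi> \<in> colourings V E C. \<forall>a\<in>A. \<forall>b\<in>A. \<phi> a = \<phi> b} = (\<Sum>p\<in>?I. card (?class p))"
    unfolding colourings_const_on_eq_UN_colour_classes[OF A] by (simp add: card_UN_disjoint)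
  also have "\<dots> = (\<Sum>(c, S)\<in>?I. chrom_count (V - S) (induced_edges E (V - S)) (card C - 1))"
    using card_colourings_colour_class[OF hyp _ C]
    by (intro sum.cong) (auto simp: indep_supersets_def)
  also have "\<dots> = card C * (\<Sum>S\<in>indep_supersets V E A. chrom_count (V - S) (induced_edges E (V - S)) (card C - 1))"
    by (simp add: sum.cartesian_product[symmetric])
  finally show ?thesis .
qed

section \<open>The chromatic polynomial\<close>

lemma chrom_count_0: "V \<noteq> {} \<Longrightarrow> chrom_count V E 0 = 0"
  by (auto simp: chrom_count_eq_card_colourings colourings_def PiE_eq_empty_iff)

lemma chrom_count_empty: "hypergraph {} E \<Longrightarrow> chrom_count {} E n = 1"
  by (auto simp: hypergraph_def chrom_count_eq_card_colourings colourings_def)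

lemma chrom_count_Suc:
  assumes "hypergraph V E" and "w \<in> V"
  shows "chrom_count V E (Suc n)
         = Suc n * (\<Sum>S\<in>indep_supersets V E {w}. chrom_count (V - S) (induced_edges E (V - S)) n)"
  using card_colourings_const_on[OF assms(1), of "{w}" "{1..Suc n}"] assms(2)
  by (simp add: chrom_count_eq_card_colourings)

lemma chrom_count_poly_exists:
  "hypergraph V E \<Longrightarrow> \<exists>p. \<forall>n. poly p (of_nat n) = (of_nat (chrom_count V E n) :: int)"
proof (induction "card V" arbitrary: V E rule: less_induct)
  case less
  show ?case
  proof (cases "V = {}")
    case True
    then show ?thesis using chrom_count_empty less.prems by (intro exI[of _ 1]) auto
  next
    case False
    then obtain w where w: "w \<in> V" by auto
    let ?I = "indep_supersets V E {w}"
    have "\<exists>q. \<forall>n. poly q (of_nat n) = (of_nat (chrom_count (V - S) (induced_edges E (V - S)) n) :: int)"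
      if "S \<in> ?I" for S
    proof (rule less.hyps)
      have "w \<in> S" "S \<subseteq> V" using that by (auto simp: indep_supersets_def indep_sets_def)
      then show "card (V - S) < card V"
        using w less.prems by (intro psubset_card_mono) (auto simp: hypergraph_def)
      show "hypergraph (V - S) (induced_edges E (V - S))"
        using less.prems by (rule hypergraph_induced) auto
    qed
    then obtain q where q: "\<And>S n. S \<in> ?I \<Longrightarrow>
        poly (q S) (of_nat n) = (of_nat (chrom_count (V - S) (induced_edges E (V - S)) n) :: int)"
      by metis
    define p where "p = pcompose ([:1, 1:] * (\<Sum>S\<in>?I. q S)) [:-1, 1:]"
    have "poly p (of_nat n) = of_nat (chrom_count V E n)" for n
    proof (cases n)
      case 0
      then show ?thesis using chrom_count_0[OF False] by (simp add: p_def poly_pcompose)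
    next
      case (Suc m)
      then show ?thesis
        using chrom_count_Suc[OF less.prems w, of m] q
        by (simp add: p_def poly_pcompose poly_sum of_nat_sum algebra_simps)
    qed
    then show ?thesis by blast
  qed
qed

lemma poly_chrom_poly:
  assumes "hypergraph V E"
  shows "poly (chrom_poly V E) (of_nat n) = of_nat (chrom_count V E n)"
proof -
  obtain p where p: "\<forall>n. poly p (of_nat n) = (of_nat (chrom_count V E n) :: int)"
    using chrom_count_poly_exists[OF assms] by blast
  then have "\<exists>!p. \<forall>n::nat. poly p (of_nat n) = (of_nat (chrom_count V E n) :: int)"
    by (metis int_poly_eqI_of_nat)
  then have "\<forall>n::nat. poly (chrom_poly V E) (of_nat n) = (of_nat (chrom_count V E n) :: int)"
    unfolding chrom_poly_def by (rule theI')
  then show ?thesis by blast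
qed

section \<open>A double root at 1\<close>

definition deletion_sum :: "'a set \<Rightarrow> 'a set set \<Rightarrow> 'a set \<Rightarrow> int poly" where
  "deletion_sum V E A = (\<Sum>S\<in>indep_supersets V E A. chrom_poly (V - S) (induced_edges E (V - S)))"

lemma pcompose_eq_deletion_sum:
  fixes Q :: "int poly"
  assumes hyp: "hypergraph V E" and A: "A \<subseteq> V" "A \<noteq> {}"
    and Q: "\<And>n. poly Q (of_nat n)
              = of_nat (card {\<phi> \<in> colourings V E {1..n}. \<forall>a\<in>A. \<forall>b\<in>A. \<phi> a = \<phi> b})"
  shows "pcompose Q [:1, 1:] = [:1, 1:] * deletion_sum V E A"
proof (rule int_poly_eqI_of_nat)
  fix n
  have hyp_del: "hypergraph (V - S) (induced_edges E (V - S))" for S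
    using hyp by (rule hypergraph_induced) auto
  have "poly (pcompose Q [:1, 1:]) (of_nat n) = poly Q (of_nat (Suc n))"
    by (simp add: poly_pcompose)
  also have "\<dots> = of_nat (card {\<phi> \<in> colourings V E {1..Suc n}. \<forall>a\<in>A. \<forall>b\<in>A. \<phi> a = \<phi> b})"
    by (rule Q)
  also have "\<dots> = of_nat (Suc n * (\<Sum>S\<in>indep_supersets V E A.
                     chrom_count (V - S) (induced_edges E (V - S)) n))"
    using card_colourings_const_on[OF hyp A, of "{1..Suc n}"] by simp
  also have "\<dots> = poly ([:1, 1:] * deletion_sum V E A) (of_nat n)"
    by (simp add: deletion_sum_def poly_sum of_nat_sum poly_chrom_poly[OF hyp_del])
  finally show "poly (pcompose Q [:1, 1:]) (of_nat n) = poly ([:1, 1:] * deletion_sum V E A) (of_nat n)" .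
qed

lemma double_root_iff_deletion_sum:
  fixes Q :: "int poly"
  assumes "hypergraph V E" and "A \<subseteq> V" "A \<noteq> {}"
    and "\<And>n. poly Q (of_nat n)
              = of_nat (card {\<phi> \<in> colourings V E {1..n}. \<forall>a\<in>A. \<forall>b\<in>A. \<phi> a = \<phi> b})"
  shows "[:-1, 1:] ^ 2 dvd Q \<longleftrightarrow> [:0, 1:] ^ 2 dvd deletion_sum V E A"
proof -
  have "[:-1, 1:] ^ 2 dvd Q \<longleftrightarrow> [:0, 1:] ^ 2 dvd pcompose Q [:1, 1:]"
    using linear_power_dvd_iff_pcompose[of 1 2 Q] by simp
  also have "\<dots> \<longleftrightarrow> [:0, 1:] ^ 2 dvd [:1, 1:] * deletion_sum V E A"
    by (simp only: pcompose_eq_deletion_sum[OF assms])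
  finally show ?thesis by (simp only: x_square_dvd_mult_iff)
qed

lemma double_root_chrom_poly_iff:
  assumes "hypergraph V E" and "w \<in> V"
  shows "[:-1, 1:] ^ 2 dvd chrom_poly V E \<longleftrightarrow> [:0, 1:] ^ 2 dvd deletion_sum V E {w}"
  using assms by (intro double_root_iff_deletion_sum)
    (simp_all add: poly_chrom_poly chrom_count_eq_card_colourings)

section \<open>Contraction\<close>

lemma inj_on_pullback:
  assumes "\<sigma> ` V = W"
  shows "inj_on (\<lambda>\<psi>. restrict (\<psi> \<circ> \<sigma>) V) (W \<rightarrow>\<^sub>E C)"
proof (rule inj_onI)
  fix \<psi> \<psi>' assume \<psi>: "\<psi> \<in> W \<rightarrow>\<^sub>E C" "\<psi>' \<in> W \<rightarrow>\<^sub>E C"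
    and eq: "restrict (\<psi> \<circ> \<sigma>) V = restrict (\<psi>' \<circ> \<sigma>) V"
  have "\<psi> y = \<psi>' y" for y
  proof (cases "y \<in> W")
    case True
    then obtain x where x: "x \<in> V" "y = \<sigma> x" using assms by blast
    have "restrict (\<psi> \<circ> \<sigma>) V x = restrict (\<psi>' \<circ> \<sigma>) V x" using eq by (rule fun_cong)
    then show ?thesis using x by simp
  next
    case False
    then show ?thesis using \<psi> by (auto simp: PiE_def extensional_def)
  qed
  then show "\<psi> = \<psi>'" ..
qed

lemma colourings_pullback:
  assumes "\<sigma> ` V = W" and "\<forall>e\<in>E. e \<subseteq> V" and \<psi>: "\<psi> \<in> colourings W ((`) \<sigma> ` E) C"
  shows "restrict (\<psi> \<circ> \<sigma>) V \<in> colourings V E C"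
proof -
  have "restrict (\<psi> \<circ> \<sigma>) V \<in> V \<rightarrow>\<^sub>E C" using \<psi> assms(1) by (auto simp: colourings_def)
  moreover have "1 < card (restrict (\<psi> \<circ> \<sigma>) V ` e)" if "e \<in> E" for e
  proof -
    have "1 < card (\<psi> ` \<sigma> ` e)" using \<psi> that unfolding colourings_def by blast
    moreover have "restrict (\<psi> \<circ> \<sigma>) V ` e = \<psi> ` \<sigma> ` e" using assms(2) that by auto
    ultimately show ?thesis by simp
  qed
  ultimately show ?thesis by (simp add: colourings_def)
qed

lemma colouring_factors_through:
  assumes W: "\<sigma> ` V = W" and EV: "\<forall>e\<in>E. e \<subseteq> V" and \<phi>: "\<phi> \<in> colourings V E C"
    and fibres: "\<forall>x\<in>V. \<forall>y\<in>V. \<sigma> x = \<sigma> y \<longrightarrow> \<phi> x = \<phi> y"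
  shows "\<exists>\<psi>\<in>colourings W ((`) \<sigma> ` E) C. restrict (\<psi> \<circ> \<sigma>) V = \<phi>"
proof
  define \<psi> where "\<psi> = restrict (\<lambda>y. \<phi> (inv_into V \<sigma> y)) W"
  show pull: "restrict (\<psi> \<circ> \<sigma>) V = \<phi>"
  proof
    fix x show "restrict (\<psi> \<circ> \<sigma>) V x = \<phi> x"
    proof (cases "x \<in> V")
      case True
      then have "inv_into V \<sigma> (\<sigma> x) \<in> V" "\<sigma> (inv_into V \<sigma> (\<sigma> x)) = \<sigma> x"
        by (simp_all add: inv_into_into f_inv_into_f)
      then have "\<phi> (inv_into V \<sigma> (\<sigma> x)) = \<phi> x" using fibres True by blast
      moreover have "\<sigma> x \<in> W" using True W by blast
      ultimately show ?thesis using True by (simp add: \<psi>_def)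
    next
      case False
      then show ?thesis using \<phi> by (auto simp: colourings_def PiE_def extensional_def)
    qed
  qed
  have "\<phi> \<in> V \<rightarrow>\<^sub>E C" using \<phi> by (simp add: colourings_def)
  then have "\<psi> \<in> W \<rightarrow>\<^sub>E C"
    unfolding \<psi>_def restrict_PiE_iff using W by (blast intro: inv_into_into)
  moreover have "1 < card (\<psi> ` \<sigma> ` e)" if "e \<in> E" for e
  proof -
    have "1 < card (\<phi> ` e)" using \<phi> that unfolding colourings_def by blast
    moreover have "restrict (\<psi> \<circ> \<sigma>) V ` e = \<psi> ` \<sigma> ` e" using EV that by auto
    ultimately show ?thesis by (simp add: pull)
  qed
  ultimately show "\<psi> \<in> colourings W ((`) \<sigma> ` E) C" by (simp add: colourings_def)
qed

lemma card_colourings_image: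
  assumes "\<sigma> ` V = W" and "\<forall>e\<in>E. e \<subseteq> V"
  shows "card (colourings W ((`) \<sigma> ` E) C)
         = card {\<phi> \<in> colourings V E C. \<forall>x\<in>V. \<forall>y\<in>V. \<sigma> x = \<sigma> y \<longrightarrow> \<phi> x = \<phi> y}"
proof (rule bij_betw_same_card, rule bij_betw_imageI)
  show "inj_on (\<lambda>\<psi>. restrict (\<psi> \<circ> \<sigma>) V) (colourings W ((`) \<sigma> ` E) C)"
    by (rule inj_on_subset[OF inj_on_pullback[OF assms(1)]]) (auto simp: colourings_def)
  show "(\<lambda>\<psi>. restrict (\<psi> \<circ> \<sigma>) V) ` colourings W ((`) \<sigma> ` E) C
        = {\<phi> \<in> colourings V E C. \<forall>x\<in>V. \<forall>y\<in>V. \<sigma> x = \<sigma> y \<longrightarrow> \<phi> x = \<phi> y}"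
  proof (intro equalityI subsetI)
    fix \<phi> assume "\<phi> \<in> (\<lambda>\<psi>. restrict (\<psi> \<circ> \<sigma>) V) ` colourings W ((`) \<sigma> ` E) C"
    then obtain \<psi> where \<psi>: "\<psi> \<in> colourings W ((`) \<sigma> ` E) C" and \<phi>: "\<phi> = restrict (\<psi> \<circ> \<sigma>) V"
      by blast
    have "\<phi> \<in> colourings V E C" unfolding \<phi> using assms \<psi> by (rule colourings_pullback)
    moreover have "\<forall>x\<in>V. \<forall>y\<in>V. \<sigma> x = \<sigma> y \<longrightarrow> \<phi> x = \<phi> y" by (simp add: \<phi>)
    ultimately show "\<phi> \<in> {\<phi> \<in> colourings V E C. \<forall>x\<in>V. \<forall>y\<in>V. \<sigma> x = \<sigma> y \<longrightarrow> \<phi> x = \<phi> y}"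
      by blast
  next
    fix \<phi> assume "\<phi> \<in> {\<phi> \<in> colourings V E C. \<forall>x\<in>V. \<forall>y\<in>V. \<sigma> x = \<sigma> y \<longrightarrow> \<phi> x = \<phi> y}"
    then obtain \<psi> where "restrict (\<psi> \<circ> \<sigma>) V = \<phi>" "\<psi> \<in> colourings W ((`) \<sigma> ` E) C"
      using colouring_factors_through[OF assms] by blast
    then show "\<phi> \<in> (\<lambda>\<psi>. restrict (\<psi> \<circ> \<sigma>) V) ` colourings W ((`) \<sigma> ` E) C"
      by (rule image_eqI[OF sym])
  qed
qed

lemma contract_as_image:
  assumes "V1 \<subseteq> V" "V1 \<noteq> {}"
  defines "\<sigma> \<equiv> \<lambda>v. if v \<in> V1 then None else Some v"
  shows "contract_V V V1 = \<sigma> ` V" and "contract_E E V1 = (`) \<sigma> ` E"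
proof -
  show "contract_V V V1 = \<sigma> ` V"
    using assms(1,2) unfolding contract_V_def \<sigma>_def by (auto simp: image_iff)
  have "\<sigma> ` e = (if e \<inter> V1 = {} then Some ` e else Some ` (e - V1) \<union> {None})" for e
    unfolding \<sigma>_def by (auto simp: image_iff)
  then have "(`) \<sigma> ` E = (\<lambda>e. if e \<inter> V1 = {} then Some ` e else Some ` (e - V1) \<union> {None}) ` E"
    by (intro image_cong) simp_all
  also have "\<dots> = contract_E E V1"
    unfolding contract_E_def by auto
  finally show "contract_E E V1 = (`) \<sigma> ` E" by (rule sym)
qed

lemma chrom_count_contract:
  assumes hyp: "hypergraph V E" and V1: "V1 \<subseteq> V" "V1 \<noteq> {}"
  shows "chrom_count (contract_V V V1) (contract_E E V1) n
         = card {\<phi> \<in> colourings V E {1..n}. \<forall>a\<in>V1. \<forall>b\<in>V1. \<phi> a = \<phi> b}"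
proof -
  define \<sigma> where "\<sigma> = (\<lambda>v. if v \<in> V1 then None else Some v)"
  have same_image: "\<sigma> x = \<sigma> y \<longleftrightarrow> x = y \<or> x \<in> V1 \<and> y \<in> V1" for x y
    by (auto simp: \<sigma>_def)
  have "(\<forall>x\<in>V. \<forall>y\<in>V. \<sigma> x = \<sigma> y \<longrightarrow> \<phi> x = \<phi> y) \<longleftrightarrow> (\<forall>a\<in>V1. \<forall>b\<in>V1. \<phi> a = \<phi> b)"
    for \<phi> :: "'a \<Rightarrow> nat"
    unfolding same_image using V1(1) by blast
  moreover have "\<forall>e\<in>E. e \<subseteq> V" using hyp by (simp add: hypergraph_def)
  ultimately show ?thesis
    using card_colourings_image[of \<sigma> V "contract_V V V1" E "{1..n}"]
    by (simp add: contract_as_image[OF V1] \<sigma>_def chrom_count_eq_card_colourings)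
qed

lemma double_root_contract_iff:
  assumes "hypergraph V E" and "V1 \<subseteq> V" "V1 \<noteq> {}"
  shows "[:-1, 1:] ^ 2 dvd chrom_poly (contract_V V V1) (contract_E E V1)
         \<longleftrightarrow> [:0, 1:] ^ 2 dvd deletion_sum V E V1"
  using assms
  by (intro double_root_iff_deletion_sum)
    (simp_all add: poly_chrom_poly hypergraph_contract chrom_count_contract)

section \<open>Disjoint unions and edgeless hypergraphs\<close>

lemma chrom_count_disjoint_union:
  assumes hyp: "hypergraph V E" and XY: "X \<union> Y = V" "X \<inter> Y = {}"
    and split: "\<forall>e\<in>E. e \<subseteq> X \<or> e \<subseteq> Y"
  shows "chrom_count V E n = chrom_count X (induced_edges E X) n * chrom_count Y (induced_edges E Y) n"
proof -
  define C where "C = {1..n}"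
  define G where "G = colourings X (induced_edges E X) C \<times> colourings Y (induced_edges E Y) C"
  define merge where "merge = (\<lambda>(\<alpha>, \<beta>) v. if v \<in> X then \<alpha> v else \<beta> v :: nat)"
  have "merge p \<in> colourings V E C" if "p \<in> G" for p
  proof -
    obtain \<alpha> \<beta> where p: "p = (\<alpha>, \<beta>)" by fastforce
    have \<alpha>: "\<alpha> \<in> colourings X (induced_edges E X) C" and \<beta>: "\<beta> \<in> colourings Y (induced_edges E Y) C"
      using that by (simp_all add: G_def p)
    have "merge p \<in> V \<rightarrow>\<^sub>E C"
      using \<alpha> \<beta> XY by (auto simp: merge_def p colourings_def PiE_def Pi_def extensional_def)
    moreover have "1 < card (merge p ` e)" if e: "e \<in> E" for e
    proof (cases "e \<subseteq> X")
      case True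
      then have "merge p ` e = \<alpha> ` e" by (auto simp: merge_def p)
      then show ?thesis using \<alpha> e True by (simp add: colourings_def induced_edges_def)
    next
      case False
      then have "e \<subseteq> Y" using split e by blast
      moreover have "merge p ` e = \<beta> ` e" using \<open>e \<subseteq> Y\<close> XY by (auto simp: merge_def p)
      ultimately show ?thesis using \<beta> e by (simp add: colourings_def induced_edges_def)
    qed
    ultimately show ?thesis by (simp add: colourings_def)
  qed
  moreover have "(restrict \<phi> X, restrict \<phi> Y) \<in> G" if "\<phi> \<in> colourings V E C" for \<phi>
    using that XY by (auto simp: G_def intro: colourings_restrict)
  moreover have "merge (restrict \<phi> X, restrict \<phi> Y) = \<phi>" if "\<phi> \<in> colourings V E C" for \<phi>
    using that XY by (auto simp: merge_def colourings_def PiE_def extensional_def fun_eq_iff)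
  moreover have "(restrict (merge p) X, restrict (merge p) Y) = p" if "p \<in> G" for p
    using that XY
    by (auto simp: G_def merge_def colourings_def PiE_def extensional_def fun_eq_iff split: prod.splits)
  ultimately have "bij_betw (\<lambda>\<phi>. (restrict \<phi> X, restrict \<phi> Y)) (colourings V E C) G"
    by (intro bij_betw_byWitness[where f' = merge]) auto
  then show ?thesis
    by (simp add: bij_betw_same_card G_def C_def chrom_count_eq_card_colourings card_cartesian_product)
qed

lemma chrom_poly_disjoint_union:
  assumes "hypergraph V E" and "X \<union> Y = V" "X \<inter> Y = {}" and "\<forall>e\<in>E. e \<subseteq> X \<or> e \<subseteq> Y"
  shows "chrom_poly V E = chrom_poly X (induced_edges E X) * chrom_poly Y (induced_edges E Y)"
proof (rule int_poly_eqI_of_nat)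
  fix n
  have "hypergraph X (induced_edges E X)" "hypergraph Y (induced_edges E Y)"
    using hypergraph_induced[OF assms(1)] assms(2) by auto
  then show "poly (chrom_poly V E) (of_nat n)
             = poly (chrom_poly X (induced_edges E X) * chrom_poly Y (induced_edges E Y)) (of_nat n)"
    using chrom_count_disjoint_union[OF assms, of n] by (simp add: poly_chrom_poly assms(1))
qed

lemma chrom_poly_edgeless:
  assumes "finite V"
  shows "chrom_poly V {} = [:0, 1:] ^ card V"
proof (rule int_poly_eqI_of_nat)
  fix n
  have "chrom_count V {} n = n ^ card V"
    using assms by (simp add: chrom_count_eq_card_colourings colourings_def card_PiE)
  then show "poly (chrom_poly V {}) (of_nat n) = poly ([:0, 1:] ^ card V) (of_nat n)"
    using assms by (simp add: poly_chrom_poly hypergraph_def)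
qed

lemma x_dvd_chrom_poly:
  assumes "hypergraph V E" and "V \<noteq> {}"
  shows "[:0, 1:] dvd chrom_poly V E"
proof -
  have "poly (chrom_poly V E) 0 = 0"
    using poly_chrom_poly[OF assms(1), of 0] chrom_count_0[OF assms(2)] by simp
  then show ?thesis using poly_eq_0_iff_dvd[of "chrom_poly V E" 0] by simp
qed

lemma x_square_dvd_chrom_poly_disconnected:
  assumes "hypergraph V E" and "X \<union> Y = V" "X \<inter> Y = {}" and "\<forall>e\<in>E. e \<subseteq> X \<or> e \<subseteq> Y"
    and "X \<noteq> {}" "Y \<noteq> {}"
  shows "[:0, 1:] ^ 2 dvd chrom_poly V E"
proof -
  have "[:0, 1:] dvd chrom_poly X (induced_edges E X)" "[:0, 1:] dvd chrom_poly Y (induced_edges E Y)"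
    using assms by (auto intro!: x_dvd_chrom_poly hypergraph_induced)
  then show ?thesis
    unfolding chrom_poly_disjoint_union[OF assms(1-4)] power2_eq_square by (rule mult_dvd_mono)
qed

lemma two_le_card_Diff_indep_supersets_iff:
  assumes hyp: "hypergraph V E" and "E \<noteq> {}" and u: "u \<in> core V E"
  shows "(\<forall>S\<in>indep_supersets V E {u}. 2 \<le> card (V - S)) \<longleftrightarrow> core V E \<subseteq> {u}"
proof
  have finV: "finite V" and uV: "u \<in> V" using hyp u by (auto simp: hypergraph_def core_def)
  assume large: "\<forall>S\<in>indep_supersets V E {u}. 2 \<le> card (V - S)"
  show "core V E \<subseteq> {u}"
  proof
    fix v assume v: "v \<in> core V E"
    then have "v \<in> V" by (simp add: core_def)
    then have "V - {v} \<in> indep_sets V E" using complement_singleton_indep_iff[OF hyp] v by blast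
    moreover have "card (V - (V - {v})) = 1" using \<open>v \<in> V\<close> by (simp add: Diff_Diff_Int)
    ultimately have "\<not> {u} \<subseteq> V - {v}" using large by (auto simp: indep_supersets_def)
    then show "v \<in> {u}" using uV by auto
  qed
next
  have finV: "finite V" using hyp by (simp add: hypergraph_def)
  assume small: "core V E \<subseteq> {u}"
  show "\<forall>S\<in>indep_supersets V E {u}. 2 \<le> card (V - S)"
  proof
    fix S assume "S \<in> indep_supersets V E {u}"
    then have SV: "S \<subseteq> V" "u \<in> S" "S \<in> indep_sets V E"
      by (auto simp: indep_supersets_def indep_sets_def)
    have "card (V - S) \<noteq> 0"
    proof
      assume "card (V - S) = 0"
      then have "S = V" using SV finV by auto
      then show False using SV(3) \<open>E \<noteq> {}\<close> hyp
        by (auto simp: indep_sets_def induced_edges_def hypergraph_def)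
    qed
    moreover have "card (V - S) \<noteq> 1"
    proof
      assume "card (V - S) = 1"
      then obtain v where v: "V - S = {v}" by (auto simp: card_Suc_eq)
      then have "S = V - {v}" "v \<in> V" using SV by auto
      then have "v \<in> core V E" using complement_singleton_indep_iff[OF hyp] SV(3) by blast
      then show False using small v SV(2) by auto
    qed
    ultimately show "2 \<le> card (V - S)" by linarith
  qed
qed

lemma double_root_iff_card_core:
  assumes hyp: "hypergraph V E" and "E \<noteq> {}" and u: "u \<in> core V E"
  shows "[:-1, 1:] ^ 2 dvd chrom_poly V E \<longleftrightarrow> card (core V E) = 1"
proof -
  let ?I = "indep_supersets V E {u}"
  have finV: "finite V" and uV: "u \<in> V" using hyp u by (auto simp: hypergraph_def core_def)
  have "chrom_poly (V - S) (induced_edges E (V - S)) = [:0, 1:] ^ card (V - S)" if "S \<in> ?I" for S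
  proof -
    have "induced_edges E (V - S) = {}"
      using that u by (auto simp: indep_supersets_def induced_edges_def core_def)
    then show ?thesis using finV by (simp add: chrom_poly_edgeless)
  qed
  then have "deletion_sum V E {u} = (\<Sum>S\<in>?I. [:0, 1:] ^ card (V - S))"
    unfolding deletion_sum_def by (rule sum.cong[OF refl])
  then have "[:-1, 1:] ^ 2 dvd chrom_poly V E \<longleftrightarrow> (\<forall>S\<in>?I. 2 \<le> card (V - S))"
    using double_root_chrom_poly_iff[OF hyp uV]
      x_power_dvd_sum_x_powers_iff[OF finite_indep_supersets[OF finV], of 2 "\<lambda>S. card (V - S)"]
    by simp
  also have "\<dots> \<longleftrightarrow> core V E \<subseteq> {u}" by (rule two_le_card_Diff_indep_supersets_iff[OF assms])
  also have "\<dots> \<longleftrightarrow> card (core V E) = 1" using u by (auto simp: card_Suc_eq)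
  finally show ?thesis .
qed

lemma double_root_iff_contract_at_cut_vertex:
  assumes hyp: "hypergraph V E" and V12: "V1 \<union> V2 = V" "V1 \<inter> V2 = {w}"
    and split: "\<forall>e\<in>E. w \<in> e \<or> e \<subseteq> V1 \<or> e \<subseteq> V2" and V2: "V2 \<notin> indep_sets V E"
  shows "[:-1, 1:] ^ 2 dvd chrom_poly V E
         \<longleftrightarrow> V1 \<notin> indep_sets V E \<or> [:-1, 1:] ^ 2 dvd chrom_poly (contract_V V V1) (contract_E E V1)"
proof -
  let ?I = "indep_supersets V E {w}"
  let ?del = "\<lambda>S. chrom_poly (V - S) (induced_edges E (V - S))"
  have finV: "finite V" using hyp by (simp add: hypergraph_def)
  have wV: "w \<in> V" and V1: "V1 \<subseteq> V" "V1 \<noteq> {}" using V12 by auto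
  have "[:0, 1:] ^ 2 dvd ?del S" if S: "S \<in> ?I - {S. V1 \<subseteq> S}" for S
  proof (rule x_square_dvd_chrom_poly_disconnected)
    have wS: "w \<in> S" and SI: "S \<in> indep_sets V E" and "\<not> V1 \<subseteq> S"
      using S by (auto simp: indep_supersets_def)
    show "hypergraph (V - S) (induced_edges E (V - S))"
      using hyp by (rule hypergraph_induced) auto
    show "(V1 - S) \<union> (V2 - S) = V - S" "(V1 - S) \<inter> (V2 - S) = {}" using V12 wS by auto
    show "\<forall>e\<in>induced_edges E (V - S). e \<subseteq> V1 - S \<or> e \<subseteq> V2 - S"
      using split wS by (auto simp: induced_edges_def)
    show "V1 - S \<noteq> {}" using \<open>\<not> V1 \<subseteq> S\<close> by auto
    obtain e where "e \<in> E" "e \<subseteq> V2"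
      using V2 V12 by (auto simp: indep_sets_def induced_edges_def)
    then have "\<not> V2 \<subseteq> S"
      using SI unfolding indep_sets_def induced_edges_def by blast
    then show "V2 - S \<noteq> {}" by auto
  qed
  then have rest: "[:0, 1:] ^ 2 dvd sum ?del (?I - {S. V1 \<subseteq> S})" by (rule dvd_sum)
  have "deletion_sum V E {w} = sum ?del (?I \<inter> {S. V1 \<subseteq> S}) + sum ?del (?I - {S. V1 \<subseteq> S})"
    unfolding deletion_sum_def by (rule sum.Int_Diff[OF finite_indep_supersets[OF finV]])
  also have "?I \<inter> {S. V1 \<subseteq> S} = indep_supersets V E V1"
    using V12 by (auto simp: indep_supersets_def)
  finally have "deletion_sum V E {w} = deletion_sum V E V1 + sum ?del (?I - {S. V1 \<subseteq> S})"
    by (simp only: deletion_sum_def)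
  then have "[:-1, 1:] ^ 2 dvd chrom_poly V E \<longleftrightarrow> [:0, 1:] ^ 2 dvd deletion_sum V E V1"
    using double_root_chrom_poly_iff[OF hyp wV] dvd_add_left_iff[OF rest] by simp
  moreover have "deletion_sum V E V1 = 0" if "V1 \<notin> indep_sets V E"
    using that indep_supersets_eq_empty_iff[OF V1(1), of E] by (simp add: deletion_sum_def)
  ultimately show ?thesis using double_root_contract_iff[OF hyp V1] by auto
qed

lemma cut_vertex_in_core:
  assumes "V1 \<subseteq> V" "V2 \<subseteq> V" "w \<in> V" and "\<forall>e\<in>E. w \<in> e \<or> e \<subseteq> V1 \<or> e \<subseteq> V2"
    and "V1 \<in> indep_sets V E" "V2 \<in> indep_sets V E"
  shows "w \<in> core V E"
  using assms unfolding core_def indep_sets_def induced_edges_def by blast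

lemma double_root_iff_cut_vertex:
  assumes hyp: "hypergraph V E" and "core V E = {}" and "w \<in> V" "V1 \<subseteq> V" "V2 \<subseteq> V"
    and V12: "V1 \<union> V2 = V" "V1 \<inter> V2 = {w}" and split: "\<forall>e\<in>E. w \<in> e \<or> e \<subseteq> V1 \<or> e \<subseteq> V2"
  shows "[:-1, 1:] ^ 2 dvd chrom_poly V E \<longleftrightarrow>
           (V1 \<notin> indep_sets V E \<and> V2 \<notin> indep_sets V E)
         \<or> (V1 \<in> indep_sets V E \<and> V2 \<notin> indep_sets V E \<and>
              [:-1, 1:] ^ 2 dvd chrom_poly (contract_V V V1) (contract_E E V1))
         \<or> (V2 \<in> indep_sets V E \<and> V1 \<notin> indep_sets V E \<and>
              [:-1, 1:] ^ 2 dvd chrom_poly (contract_V V V2) (contract_E E V2))"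
proof -
  have V21: "V2 \<union> V1 = V" "V2 \<inter> V1 = {w}" and split': "\<forall>e\<in>E. w \<in> e \<or> e \<subseteq> V2 \<or> e \<subseteq> V1"
    using V12 split by auto
  have "V1 \<notin> indep_sets V E \<or> V2 \<notin> indep_sets V E"
    using cut_vertex_in_core[OF assms(4,5,3) split] assms(2) by blast
  then show ?thesis
    using double_root_iff_contract_at_cut_vertex[OF hyp V12 split]
      double_root_iff_contract_at_cut_vertex[OF hyp V21 split']
    by blast
qed

theorem theorem4:
  fixes V :: "'a set" and E :: "'a set set"
  assumes "hypergraph V E" and "hg_connected V E" and "sperner E" and "card E \<ge> 2"
  shows "(core V E \<noteq> {} \<longrightarrow>
            ([:-1, 1:]^2 dvd chrom_poly V E \<longleftrightarrow> card (core V E) = 1))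
       \<and> (\<forall>w V1 V2. core V E = {} \<and> w \<in> V \<and> V1 \<subset> V \<and> V2 \<subset> V \<and> V1 \<union> V2 = V \<and>
            V1 \<inter> V2 = {w} \<and> (\<forall>e\<in>E. w \<in> e \<or> e \<subseteq> V1 \<or> e \<subseteq> V2) \<longrightarrow>
            ([:-1, 1:]^2 dvd chrom_poly V E \<longleftrightarrow>
               (V1 \<notin> indep_sets V E \<and> V2 \<notin> indep_sets V E)
             \<or> (V1 \<in> indep_sets V E \<and> V2 \<notin> indep_sets V E \<and>
                  [:-1, 1:]^2 dvd chrom_poly (contract_V V V1) (contract_E E V1))
             \<or> (V2 \<in> indep_sets V E \<and> V1 \<notin> indep_sets V E \<and>
                  [:-1, 1:]^2 dvd chrom_poly (contract_V V V2) (contract_E E V2))))"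
proof (intro conjI impI allI, goal_cases)
  case 1
  then obtain u where "u \<in> core V E" by blast
  moreover have "E \<noteq> {}" using assms(4) by auto
  ultimately show ?case by (rule double_root_iff_card_core[OF assms(1), rotated])
next
  case (2 w V1 V2)
  then show ?case using double_root_iff_cut_vertex[OF assms(1), of w V1 V2] by blast
qed

end
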